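(* Let $G$ be a finite graph with $n$ vertices, let $0<\epsilon<1$, and let $d$ be an integer such that for every vertex $v$ of $G$, at least $(1-\epsilon)n$ vertices of $G$ are at distance exactly $d$ from $v$. Suppose that for some integer $r\ge 0$ with $2r+1\le d$ and some $N>0$ we have $|N_r(v)|\ge N$ for every vertex $v$ of $G$. Then $|N_{3r+1}(v)| \ge N\epsilon^{-1}$ for every vertex $v$ of $G$.
   Context: For a vertex $v$ and integer $s\ge0$, $N_s(v)$ denotes the set of vertices at graph distance at most $s$ from $v$. The paper calls such a $G$ $\epsilon$-distance-uniform with critical distance $d$. *)

theory Defs
  imports Complex_Main
begin

definition simple_graph :: "'a set \<Rightarrow> ('a \<Rightarrow> 'a \<Rightarrow> bool) \<Rightarrow> bool" where
  "simple_graph V E \<longleftrightarrow> finite V \<and> (\<forall>u v. E u v \<longrightarrow> u \<in> V \<and> v \<in> V)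
     \<and> (\<forall>u v. E u v \<longrightarrow> E v u) \<and> (\<forall>u. \<not> E u u)"

definition walk_len :: "'a set \<Rightarrow> ('a \<Rightarrow> 'a \<Rightarrow> bool) \<Rightarrow> nat \<Rightarrow> 'a \<Rightarrow> 'a \<Rightarrow> bool" where
  "walk_len V E k u v \<longleftrightarrow> (\<exists>xs. length xs = Suc k \<and> hd xs = u \<and> last xs = v
      \<and> set xs \<subseteq> V \<and> (\<forall>i<k. E (xs ! i) (xs ! Suc i)))"

definition dist_le :: "'a set \<Rightarrow> ('a \<Rightarrow> 'a \<Rightarrow> bool) \<Rightarrow> nat \<Rightarrow> 'a \<Rightarrow> 'a \<Rightarrow> bool" where
  "dist_le V E s u v \<longleftrightarrow> (\<exists>k\<le>s. walk_len V E k u v)"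

definition dist_eq :: "'a set \<Rightarrow> ('a \<Rightarrow> 'a \<Rightarrow> bool) \<Rightarrow> nat \<Rightarrow> 'a \<Rightarrow> 'a \<Rightarrow> bool" where
  "dist_eq V E d u v \<longleftrightarrow> walk_len V E d u v \<and> (\<forall>k<d. \<not> walk_len V E k u v)"

definition ball_set :: "'a set \<Rightarrow> ('a \<Rightarrow> 'a \<Rightarrow> bool) \<Rightarrow> nat \<Rightarrow> 'a \<Rightarrow> 'a set" where
  "ball_set V E s v = {u \<in> V. dist_le V E s v u}"

end

theory Submission
  imports Defs
begin

text \<open>Fix v and count pairs (x, z) with x \<in> N_{3r+1}(v), z \<in> V and dist(x, z) \<noteq> d.
  Each x contributes at most \<epsilon>n such z. Conversely, for every z there is a vertex y with
  dist(v, y) \<le> 2r+1 whose whole ball N_r(y) avoids the sphere of radius d around z: if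
  dist(v, z) \<le> d + r, take y on a v-z walk of length at most d + r, within d - r - 1 of z;
  otherwise take y = v. As N_r(y) \<subseteq> N_{3r+1}(v), every z contributes at least N pairs,
  so nN \<le> |N_{3r+1}(v)| \<epsilon>n.\<close>

inductive walk :: "'a set \<Rightarrow> ('a \<Rightarrow> 'a \<Rightarrow> bool) \<Rightarrow> nat \<Rightarrow> 'a \<Rightarrow> 'a \<Rightarrow> bool" for V E where
  walk_Nil: "u \<in> V \<Longrightarrow> walk V E 0 u u"
| walk_Cons: "E u w \<Longrightarrow> walk V E k w v \<Longrightarrow> walk V E (Suc k) u v"

lemma simple_graph_edgeD:
  "simple_graph V E \<Longrightarrow> E u w \<Longrightarrow> u \<in> V \<and> w \<in> V \<and> E w u"
  unfolding simple_graph_def by blast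

lemma walk_len_imp_walk:
  "walk_len V E k u v \<Longrightarrow> walk V E k u v"
proof (induction k arbitrary: u)
  case 0
  then obtain xs where xs: "length xs = 1" "hd xs = u" "last xs = v" "set xs \<subseteq> V"
    unfolding walk_len_def by auto
  then obtain a where "xs = [a]"
    by (metis One_nat_def length_0_conv length_Suc_conv)
  then show ?case
    using xs by (auto intro: walk_Nil)
next
  case (Suc k)
  then obtain xs where xs: "length xs = Suc (Suc k)" "hd xs = u" "last xs = v" "set xs \<subseteq> V"
     "\<forall>i<Suc k. E (xs ! i) (xs ! Suc i)"
    unfolding walk_len_def by blast
  then obtain ys where ys: "xs = u # ys" "length ys = Suc k"
    by (cases xs) auto
  then have "ys \<noteq> []"
    by auto
  have "E u (hd ys)"
    using xs(5) ys \<open>ys \<noteq> []\<close> by (auto simp: hd_conv_nth)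
  moreover have "walk_len V E k (hd ys) v"
    unfolding walk_len_def
  proof (intro exI[of _ ys] conjI allI impI)
    fix i assume "i < k"
    then show "E (ys ! i) (ys ! Suc i)"
      using xs(5) ys by (metis Suc_less_eq nth_Cons_Suc)
  qed (use xs ys \<open>ys \<noteq> []\<close> in auto)
  ultimately show ?case
    using Suc.IH by (blast intro: walk_Cons)
qed

lemma walk_imp_walk_len:
  assumes "simple_graph V E"
  shows "walk V E k u v \<Longrightarrow> walk_len V E k u v"
proof (induction rule: walk.induct)
  case (walk_Nil u)
  then show ?case
    unfolding walk_len_def by (intro exI[of _ "[u]"]) auto
next
  case (walk_Cons u w k v)
  then obtain ys where ys: "length ys = Suc k" "hd ys = w" "last ys = v" "set ys \<subseteq> V"
     "\<forall>i<k. E (ys ! i) (ys ! Suc i)"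
    unfolding walk_len_def by blast
  have "ys \<noteq> []" "u \<in> V"
    using ys(1) simple_graph_edgeD[OF assms walk_Cons(1)] by auto
  show ?case
    unfolding walk_len_def
  proof (intro exI[of _ "u # ys"] conjI allI impI)
    fix i assume i: "i < Suc k"
    show "E ((u # ys) ! i) ((u # ys) ! Suc i)"
      using i walk_Cons(1) ys \<open>ys \<noteq> []\<close> by (cases i) (auto simp: hd_conv_nth)
  qed (use ys \<open>ys \<noteq> []\<close> \<open>u \<in> V\<close> in auto)
qed

lemma walk_len_iff_walk:
  "simple_graph V E \<Longrightarrow> walk_len V E k u v \<longleftrightarrow> walk V E k u v"
  using walk_len_imp_walk walk_imp_walk_len by metis

lemma walk_in_vertices:
  "walk V E k u v \<Longrightarrow> simple_graph V E \<Longrightarrow> u \<in> V \<and> v \<in> V"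
  by (induction rule: walk.induct) (auto dest: simple_graph_edgeD)

lemma walk_append:
  "walk V E k u v \<Longrightarrow> walk V E m v w \<Longrightarrow> walk V E (k + m) u w"
  by (induction rule: walk.induct) (auto intro: walk_Cons)

lemma walk_snoc:
  assumes "simple_graph V E"
  shows "walk V E k u v \<Longrightarrow> E v w \<Longrightarrow> walk V E (Suc k) u w"
  using walk_append[of V E k u v 1 w] simple_graph_edgeD[OF assms, of v w]
  by (auto intro: walk_Cons walk_Nil)

lemma walk_rev:
  assumes "simple_graph V E"
  shows "walk V E k u v \<Longrightarrow> walk V E k v u"
  by (induction rule: walk.induct)
    (auto intro: walk_Nil walk_snoc[OF assms] dest: simple_graph_edgeD[OF assms])

lemma walk_split:
  assumes "simple_graph V E"
  shows "walk V E k u v \<Longrightarrow> t \<le> k \<Longrightarrow> \<exists>y. walk V E t u y \<and> walk V E (k - t) y v"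
proof (induction arbitrary: t rule: walk.induct)
  case (walk_Nil u)
  then show ?case by (auto intro: walk.walk_Nil)
next
  case (walk_Cons u w k v)
  show ?case
  proof (cases t)
    case 0
    then show ?thesis
      using walk_Cons(1,2) simple_graph_edgeD[OF assms walk_Cons(1)]
      by (auto intro: walk.intros)
  next
    case (Suc s)
    then obtain y where "walk V E s w y" "walk V E (k - s) y v"
      using walk_Cons.IH walk_Cons.prems by auto
    then show ?thesis
      using Suc walk_Cons(1) by (auto intro: walk.walk_Cons)
  qed
qed

lemma dist_le_iff_walk:
  "simple_graph V E \<Longrightarrow> dist_le V E s u v \<longleftrightarrow> (\<exists>k\<le>s. walk V E k u v)"
  unfolding dist_le_def by (simp add: walk_len_iff_walk)

lemma dist_le_refl:
  "simple_graph V E \<Longrightarrow> u \<in> V \<Longrightarrow> dist_le V E s u u"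
  by (auto simp: dist_le_iff_walk intro: walk_Nil)

lemma dist_le_sym:
  "simple_graph V E \<Longrightarrow> dist_le V E s u v \<Longrightarrow> dist_le V E s v u"
  by (auto simp: dist_le_iff_walk dest: walk_rev)

lemma dist_le_trans:
  "simple_graph V E \<Longrightarrow> dist_le V E s u v \<Longrightarrow> dist_le V E t v w \<Longrightarrow> dist_le V E (s + t) u w"
  by (auto simp: dist_le_iff_walk intro!: add_mono dest: walk_append)

lemma dist_le_split:
  assumes g: "simple_graph V E" and "dist_le V E (s + t) u w"
  shows "\<exists>y. dist_le V E s u y \<and> dist_le V E t y w"
proof -
  obtain k where k: "k \<le> s + t" "walk V E k u w"
    using assms by (auto simp: dist_le_iff_walk[OF g])
  show ?thesis
  proof (cases "k \<le> s")
    case True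
    then show ?thesis
      using k walk_in_vertices[OF k(2) g]
      by (auto simp: dist_le_iff_walk[OF g] intro: walk_Nil)
  next
    case False
    then obtain y where "walk V E s u y" "walk V E (k - s) y w"
      using walk_split[OF g k(2), of s] by auto
    moreover have "k - s \<le> t"
      using k(1) by simp
    ultimately show ?thesis
      by (auto simp: dist_le_iff_walk[OF g])
  qed
qed

lemma not_dist_eq_if_dist_le_less:
  "dist_le V E s x z \<Longrightarrow> s < d \<Longrightarrow> \<not> dist_eq V E d x z"
  unfolding dist_le_def dist_eq_def by fastforce

lemma ball_set_subset_ball_set:
  "simple_graph V E \<Longrightarrow> dist_le V E s v y \<Longrightarrow> ball_set V E r y \<subseteq> ball_set V E (s + r) v"
  unfolding ball_set_def by (auto intro: dist_le_trans)

lemma exists_near_ball_avoiding_sphere: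
  assumes g: "simple_graph V E" and "2 * r + 1 \<le> d" and "v \<in> V"
  shows "\<exists>y\<in>V. dist_le V E (2 * r + 1) v y \<and> (\<forall>x. dist_le V E r y x \<longrightarrow> \<not> dist_eq V E d x z)"
proof (cases "dist_le V E (d + r) v z")
  case True
  moreover have "d + r = (2 * r + 1) + (d - r - 1)"
    using assms(2) by simp
  ultimately obtain y where y: "dist_le V E (2 * r + 1) v y" "dist_le V E (d - r - 1) y z"
    using dist_le_split[OF g] by metis
  have "\<not> dist_eq V E d x z" if "dist_le V E r y x" for x
  proof (rule not_dist_eq_if_dist_le_less)
    show "dist_le V E (r + (d - r - 1)) x z"
      using dist_le_trans[OF g dist_le_sym[OF g that] y(2)] .
    show "r + (d - r - 1) < d"
      using assms(2) by simp
  qed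
  moreover have "y \<in> V"
    using y(1) by (auto simp: dist_le_iff_walk[OF g] dest: walk_in_vertices[OF _ g])
  ultimately show ?thesis
    using y(1) by blast
next
  case False
  have "\<not> dist_eq V E d x z" if "dist_le V E r v x" for x
  proof
    assume "dist_eq V E d x z"
    then have "dist_le V E d x z"
      unfolding dist_eq_def dist_le_def by blast
    then show False
      using False dist_le_trans[OF g that] by (simp add: add.commute)
  qed
  then show ?thesis
    using assms(3) dist_le_refl[OF g] by blast
qed

lemma double_counting_le:
  fixes P :: "'a \<Rightarrow> 'b \<Rightarrow> bool"
  assumes "finite A" "finite B"
    and "\<forall>y\<in>B. a \<le> real (card {x \<in> A. P x y})"
    and "\<forall>x\<in>A. real (card {y \<in> B. P x y}) \<le> c"
  shows "real (card B) * a \<le> real (card A) * c"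
proof -
  have "real (card B) * a = (\<Sum>y\<in>B. a)"
    by simp
  also have "\<dots> \<le> (\<Sum>y\<in>B. real (card {x \<in> A. P x y}))"
    by (rule sum_mono) (use assms(3) in auto)
  also have "\<dots> = (\<Sum>y\<in>B. \<Sum>x\<in>A. if P x y then 1 else 0)"
    using sum.inter_filter[OF assms(1), of "\<lambda>_. 1::real"] by simp
  also have "\<dots> = (\<Sum>x\<in>A. \<Sum>y\<in>B. if P x y then 1 else 0)"
    by (rule sum.swap)
  also have "\<dots> = (\<Sum>x\<in>A. real (card {y \<in> B. P x y}))"
    using sum.inter_filter[OF assms(2), of "\<lambda>_. 1::real"] by simp
  also have "\<dots> \<le> (\<Sum>x\<in>A. c)"
    by (rule sum_mono) (use assms(4) in auto)
  finally show ?thesis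
    by simp
qed

lemma card_filter_not:
  "finite A \<Longrightarrow> real (card {x \<in> A. \<not> P x}) = real (card A) - real (card {x \<in> A. P x})"
proof -
  assume "finite A"
  have "{x \<in> A. \<not> P x} = A - {x \<in> A. P x}"
    by blast
  then show ?thesis
    using \<open>finite A\<close> by (simp add: card_Diff_subset of_nat_diff card_mono)
qed

theorem lemma4:
  fixes V :: "'a set" and E :: "'a \<Rightarrow> 'a \<Rightarrow> bool"
    and \<epsilon> :: real and d r :: nat and N :: real
  assumes "simple_graph V E"
    and "0 < \<epsilon>" and "\<epsilon> < 1"
    and "\<forall>v\<in>V. real (card {u \<in> V. dist_eq V E d v u}) \<ge> (1 - \<epsilon>) * real (card V)"
    and "2 * r + 1 \<le> d"
    and "N > 0"
    and "\<forall>v\<in>V. real (card (ball_set V E r v)) \<ge> N"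
  shows "\<forall>v\<in>V. real (card (ball_set V E (3 * r + 1) v)) \<ge> N / \<epsilon>"
proof
  fix v assume "v \<in> V"
  have g: "simple_graph V E" and fin: "finite V"
    using assms(1) unfolding simple_graph_def by auto
  define B where "B = ball_set V E (3 * r + 1) v"
  have "finite B"
    using fin by (simp add: B_def ball_set_def)
  have far: "real (card {z \<in> V. \<not> dist_eq V E d x z}) \<le> \<epsilon> * real (card V)" if "x \<in> B" for x
    using assms(4) that fin by (auto simp: B_def ball_set_def card_filter_not algebra_simps)
  have near: "N \<le> real (card {x \<in> B. \<not> dist_eq V E d x z})" for z
  proof -
    obtain y where "y \<in> V" and y: "dist_le V E (2 * r + 1) v y"
      and avoid: "\<forall>x. dist_le V E r y x \<longrightarrow> \<not> dist_eq V E d x z"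
      using exists_near_ball_avoiding_sphere[OF g assms(5) \<open>v \<in> V\<close>] by blast
    have "ball_set V E r y \<subseteq> {x \<in> B. \<not> dist_eq V E d x z}"
      using ball_set_subset_ball_set[OF g y, of r] avoid
      by (auto simp: B_def ball_set_def algebra_simps)
    then have "card (ball_set V E r y) \<le> card {x \<in> B. \<not> dist_eq V E d x z}"
      using \<open>finite B\<close> by (intro card_mono) auto
    then show ?thesis
      using assms(7) \<open>y \<in> V\<close> by force
  qed
  have "real (card V) * N \<le> real (card B) * (\<epsilon> * real (card V))"
    using near far
    by (intro double_counting_le[OF \<open>finite B\<close> fin, where P = "\<lambda>x z. \<not> dist_eq V E d x z"]) auto
  moreover have "real (card V) > 0"
    using fin \<open>v \<in> V\<close> by (auto simp: card_gt_0_iff)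
  ultimately have "N \<le> real (card B) * \<epsilon>"
    by (simp add: algebra_simps)
  then show "N / \<epsilon> \<le> real (card (ball_set V E (3 * r + 1) v))"
    using assms(2) by (simp add: B_def divide_le_eq)
qed

end
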